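(* Assume $K>1$, $N_r\ge K$, all users share the same parameters $\alpha_k=\alpha$, $c_k=c$, $a_k=a$ ($|a|<1$), data power $P_k=P$ and pilot power $P_{p,k}=P_p$. Let $s=\frac{\sigma_p^2}{\alpha^2P_p\tau_p}$, $\hat e,\check e,z$ as in the definitions below, $\phi=\alpha^2P(\hat ec+\check eca^* )$ and $\beta=K\alpha^2Pz+\sigma_d^2$. Then for every $(P,P_p)$ with $P,P_p>0$ the equation $\frac{\beta}{\phi}=\frac{N_r}{\bar\gamma}-\frac{K-1}{1+\bar\gamma}$ has a unique positive solution $\bar\gamma(P,P_p)$, which is a strictly decreasing function of $\beta/\phi$. Consequently, for $\tau_p,\tau_d\ge1$ and $P_{\mathrm{tot}}>0$, the pairs $(P,P_p)$ maximizing $\bar\gamma(P,P_p)$ subject to $P\tau_d+P_p\tau_p=P_{\mathrm{tot}}$, $P,P_p>0$, are exactly those maximizing $\phi/\beta$ subject to the same constraint.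
   Context: $\hat e=\frac{c(c+s-|a|^2c)}{(c+s)^2-|a|^2c^2}$, $\check e=\frac{acs}{(c+s)^2-|a|^2c^2}$, $z=\frac{cs(c+s-|a|^2c)}{(c+s)^2-|a|^2c^2}$, with $c>0$, $\sigma_p^2,\sigma_d^2>0$. $\tau_p,\tau_d$ are the numbers of pilot and data symbols; $P_{\mathrm{tot}}$ is the per-user total power budget. The equation for $\bar\gamma$ is the average-SINR equation of the MMSE receiver specialized to identical users. *)

theory Defs
  imports Complex_Main
begin

definition s_par :: "real \<Rightarrow> real \<Rightarrow> real \<Rightarrow> nat \<Rightarrow> real" where
  "s_par sp2 \<alpha> Pp \<tau>p = sp2 / (\<alpha>^2 * Pp * real \<tau>p)"

definition den :: "real \<Rightarrow> complex \<Rightarrow> real \<Rightarrow> real" where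
  "den c a s = (c + s)^2 - (cmod a)^2 * c^2"

definition ehat :: "real \<Rightarrow> complex \<Rightarrow> real \<Rightarrow> real" where
  "ehat c a s = c * (c + s - (cmod a)^2 * c) / den c a s"

definition echeck :: "real \<Rightarrow> complex \<Rightarrow> real \<Rightarrow> complex" where
  "echeck c a s = a * complex_of_real (c * s) / complex_of_real (den c a s)"

definition zvar :: "real \<Rightarrow> complex \<Rightarrow> real \<Rightarrow> real" where
  "zvar c a s = c * s * (c + s - (cmod a)^2 * c) / den c a s"

text \<open>phi = alpha^2 P (ehat c + echeck c conj(a)); this expression is real
  (echeck c conj a = |a|^2 c^2 s / den), we take its real part.\<close>
definition phi :: "real \<Rightarrow> real \<Rightarrow> real \<Rightarrow> complex \<Rightarrow> real \<Rightarrow> real" where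
  "phi \<alpha> P c a s = Re (complex_of_real (\<alpha>^2 * P) *
      (complex_of_real (ehat c a s * c) + echeck c a s * complex_of_real c * cnj a))"

definition beta :: "nat \<Rightarrow> real \<Rightarrow> real \<Rightarrow> real \<Rightarrow> complex \<Rightarrow> real \<Rightarrow> real \<Rightarrow> real" where
  "beta K \<alpha> P c a s sd2 = real K * \<alpha>^2 * P * zvar c a s + sd2"

definition sinr_eq :: "nat \<Rightarrow> nat \<Rightarrow> real \<Rightarrow> real \<Rightarrow> bool" where
  "sinr_eq Nr K r g \<longleftrightarrow> r = real Nr / g - (real K - 1) / (1 + g)"

definition gbar :: "nat \<Rightarrow> nat \<Rightarrow> real \<Rightarrow> real" where
  "gbar Nr K r = (THE g. g > 0 \<and> sinr_eq Nr K r g)"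

end

theory Submission
  imports Defs
begin

text \<open>The right-hand side of the SINR equation is strictly decreasing in \<open>\<gamma> > 0\<close> (because
  \<open>N\<^sub>r > K - 1\<close>), so it has at most one positive solution; clearing denominators turns the
  equation into a quadratic with a positive root, so it has exactly one. Being the inverse of a
  decreasing function, the solution \<open>\<gamma>\<close> decreases strictly with \<open>\<beta>/\<phi>\<close>. Since \<open>\<beta> > 0\<close> and
  \<open>\<phi> > 0\<close> for all positive powers, maximizing \<open>\<gamma>\<close> is the same as minimizing \<open>\<beta>/\<phi>\<close>, i.e.
  maximizing \<open>\<phi>/\<beta>\<close>.\<close>

definition sinr_rhs :: "nat \<Rightarrow> nat \<Rightarrow> real \<Rightarrow> real" where
  "sinr_rhs Nr K g = real Nr / g - (real K - 1) / (1 + g)"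

lemma sinr_eq_iff_rhs: "sinr_eq Nr K r g \<longleftrightarrow> r = sinr_rhs Nr K g"
  by (simp add: sinr_eq_def sinr_rhs_def)

context
  fixes Nr K :: nat
  assumes K_pos: "K \<ge> 1" and Nr_ge_K: "Nr \<ge> K"
begin

lemma sinr_rhs_strict_antimono:
  assumes "0 < x" "x < y"
  shows "sinr_rhs Nr K y < sinr_rhs Nr K x"
proof -
  have K1: "real K - 1 \<ge> 0" "real K - 1 < real Nr" using K_pos Nr_ge_K by auto
  have "(real K - 1) * (x * y) \<le> (real K - 1) * ((1 + x) * (1 + y))"
    using K1 assms by (intro mult_left_mono) (auto simp: algebra_simps)
  also have "\<dots> < real Nr * ((1 + x) * (1 + y))"
    using K1 assms by (intro mult_strict_right_mono) auto
  finally have "0 < (y - x) * (real Nr * ((1 + x) * (1 + y)) - (real K - 1) * (x * y))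
                      / (x * y * (1 + x) * (1 + y))"
    using assms by (intro divide_pos_pos mult_pos_pos) auto
  also have "\<dots> = sinr_rhs Nr K x - sinr_rhs Nr K y"
  proof -
    have "x + x * x > 0" "y + y * y > 0" using assms by (simp_all add: add_pos_pos)
    thus ?thesis using assms unfolding sinr_rhs_def by (simp add: field_simps)
  qed
  finally show ?thesis by simp
qed

lemma sinr_rhs_le_iff:
  assumes "0 < x" "0 < y"
  shows "sinr_rhs Nr K y \<le> sinr_rhs Nr K x \<longleftrightarrow> x \<le> y"
  using sinr_rhs_strict_antimono[of x y] sinr_rhs_strict_antimono[of y x] assms
  by (cases x y rule: linorder_cases) auto

lemma sinr_eq_solvable:
  assumes "r > 0"
  shows "\<exists>g>0. sinr_eq Nr K r g"
proof -
  define b where "b = r + real K - 1 - real Nr"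
  define D where "D = b\<^sup>2 + 4 * r * real Nr"
  define g where "g = (- b + sqrt D) / (2 * r)"
  have "b\<^sup>2 < D" unfolding D_def using assms K_pos Nr_ge_K by auto
  hence "\<bar>b\<bar> < sqrt D" using real_sqrt_less_iff[of "b\<^sup>2" D] by simp
  hence g_pos: "g > 0" unfolding g_def using assms by auto
  have "D \<ge> 0" using \<open>b\<^sup>2 < D\<close> zero_le_power2[of b] by linarith
  hence "(sqrt D)\<^sup>2 = D" by simp
  \<comment> \<open>\<open>g\<close> is the positive root of \<open>r g\<^sup>2 + b g - N\<^sub>r\<close>, the cleared-denominator form of the equation\<close>
  hence "r * g\<^sup>2 + b * g - real Nr = 0"
    unfolding g_def D_def using assms by (simp add: field_simps power2_eq_square)
  moreover have "g + g * g > 0" using g_pos by (simp add: add_pos_pos)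
  ultimately have "r = sinr_rhs Nr K g"
    unfolding sinr_rhs_def b_def using g_pos by (simp add: field_simps power2_eq_square)
  thus ?thesis using g_pos sinr_eq_iff_rhs by blast
qed

lemma sinr_eq_unique_solution:
  assumes "r > 0"
  shows "\<exists>!g. g > 0 \<and> sinr_eq Nr K r g"
proof (rule ex_ex1I)
  show "\<exists>g. g > 0 \<and> sinr_eq Nr K r g" using sinr_eq_solvable[OF assms] by blast
next
  fix g h assume g: "g > 0 \<and> sinr_eq Nr K r g" and h: "h > 0 \<and> sinr_eq Nr K r h"
  hence "sinr_rhs Nr K g = sinr_rhs Nr K h" by (simp add: sinr_eq_iff_rhs)
  thus "g = h" using sinr_rhs_le_iff[of g h] sinr_rhs_le_iff[of h g] g h by simp
qed

lemma gbar_solves: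
  assumes "r > 0"
  shows "gbar Nr K r > 0" "r = sinr_rhs Nr K (gbar Nr K r)"
  using theI'[OF sinr_eq_unique_solution[OF assms]]
  unfolding gbar_def sinr_eq_iff_rhs by auto

lemma gbar_le_iff:
  assumes "r1 > 0" "r2 > 0"
  shows "gbar Nr K r2 \<le> gbar Nr K r1 \<longleftrightarrow> r1 \<le> r2"
  using sinr_rhs_le_iff[of "gbar Nr K r2" "gbar Nr K r1"] gbar_solves[OF assms(1)]
    gbar_solves[OF assms(2)]
  by simp

lemma gbar_strict_antimono:
  assumes "0 < r1" "r1 < r2"
  shows "gbar Nr K r2 < gbar Nr K r1"
  using gbar_le_iff[of r2 r1] assms by simp

end

lemma cmod_sq_mult_less:
  fixes x :: real
  assumes "cmod a < 1" "x > 0"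
  shows "(cmod a)\<^sup>2 * x < x"
  using assms by (simp add: abs_square_less_1)

context
  fixes c s :: real and a :: complex
  assumes c_pos: "c > 0" and s_pos: "s > 0" and a_lt_1: "cmod a < 1"
begin

lemma ehat_numerator_pos: "c + s - (cmod a)\<^sup>2 * c > 0"
  using cmod_sq_mult_less[OF a_lt_1 c_pos] s_pos by linarith

lemma den_pos: "den c a s > 0"
proof -
  have "c\<^sup>2 < (c + s)\<^sup>2" using c_pos s_pos by (simp add: power_strict_mono)
  moreover have "(cmod a)\<^sup>2 * c\<^sup>2 < c\<^sup>2" using cmod_sq_mult_less[OF a_lt_1] c_pos by simp
  ultimately show ?thesis unfolding den_def by linarith
qed

lemma ehat_pos: "ehat c a s > 0"
  unfolding ehat_def using ehat_numerator_pos den_pos c_pos by simp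

lemma zvar_pos: "zvar c a s > 0"
  unfolding zvar_def using ehat_numerator_pos den_pos c_pos s_pos by simp

end

lemma phi_eq_real:
  "phi \<alpha> P c a s = \<alpha>\<^sup>2 * P * (ehat c a s * c + (cmod a)\<^sup>2 * c * s * c / den c a s)"
proof -
  have "echeck c a s * complex_of_real c * cnj a
        = complex_of_real ((cmod a)\<^sup>2 * c * s * c / den c a s)"
    unfolding echeck_def by (simp add: field_simps) (metis complex_norm_square of_real_power)
  thus ?thesis unfolding phi_def by simp
qed

lemma phi_pos:
  assumes "c > 0" "s > 0" "cmod a < 1" "\<alpha> > 0" "P > 0"
  shows "phi \<alpha> P c a s > 0"
proof -
  have "ehat c a s * c + (cmod a)\<^sup>2 * c * s * c / den c a s > 0"
    using ehat_pos[OF assms(1-3)] den_pos[OF assms(1-3)] assms by (simp add: add_pos_nonneg)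
  thus ?thesis unfolding phi_eq_real using assms by simp
qed

lemma beta_pos:
  assumes "c > 0" "s > 0" "cmod a < 1" "sd2 > 0" "P \<ge> 0"
  shows "beta K \<alpha> P c a s sd2 > 0"
  unfolding beta_def using zvar_pos[OF assms(1-3)] assms by (simp add: add_nonneg_pos)

lemma s_par_pos:
  assumes "sp2 > 0" "\<alpha> > 0" "Pp > 0" "\<tau>p \<ge> 1"
  shows "s_par sp2 \<alpha> Pp \<tau>p > 0"
  unfolding s_par_def using assms by simp

lemma inverse_ratio_le_iff:
  fixes B F B' F' :: real
  assumes "0 < B / F" "0 < B' / F'"
  shows "F' / B' \<le> F / B \<longleftrightarrow> B / F \<le> B' / F'"
  using inverse_le_iff_le[OF assms(2,1)] by (simp add: inverse_divide)

theorem lemma4: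
  fixes K Nr \<tau>p :: nat and \<alpha> c sp2 sd2 :: real and a :: complex
  assumes "K > 1" and "Nr \<ge> K" and "cmod a < 1" and "\<alpha> > 0" and "c > 0"
    and "sp2 > 0" and "sd2 > 0" and "\<tau>p \<ge> 1"
  defines "Phi \<equiv> \<lambda>P Pp. phi \<alpha> P c a (s_par sp2 \<alpha> Pp \<tau>p)"
    and "Beta \<equiv> \<lambda>P Pp. beta K \<alpha> P c a (s_par sp2 \<alpha> Pp \<tau>p) sd2"
  shows
    "(\<forall>P Pp. P > 0 \<longrightarrow> Pp > 0 \<longrightarrow>
        (\<exists>!g. g > 0 \<and> sinr_eq Nr K (Beta P Pp / Phi P Pp) g))
   \<and> (\<forall>P1 Pp1 P2 Pp2. P1 > 0 \<longrightarrow> Pp1 > 0 \<longrightarrow> P2 > 0 \<longrightarrow> Pp2 > 0 \<longrightarrow>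
        Beta P1 Pp1 / Phi P1 Pp1 < Beta P2 Pp2 / Phi P2 Pp2 \<longrightarrow>
        gbar Nr K (Beta P2 Pp2 / Phi P2 Pp2) < gbar Nr K (Beta P1 Pp1 / Phi P1 Pp1))
   \<and> (\<forall>(\<tau>d::nat) (Ptot::real). \<tau>d \<ge> 1 \<longrightarrow> Ptot > 0 \<longrightarrow>
        (\<forall>P Pp. P > 0 \<longrightarrow> Pp > 0 \<longrightarrow> P * real \<tau>d + Pp * real \<tau>p = Ptot \<longrightarrow>
          ((\<forall>P' Pp'. P' > 0 \<longrightarrow> Pp' > 0 \<longrightarrow> P' * real \<tau>d + Pp' * real \<tau>p = Ptot \<longrightarrow>
              gbar Nr K (Beta P' Pp' / Phi P' Pp') \<le> gbar Nr K (Beta P Pp / Phi P Pp))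
           \<longleftrightarrow>
           (\<forall>P' Pp'. P' > 0 \<longrightarrow> Pp' > 0 \<longrightarrow> P' * real \<tau>d + Pp' * real \<tau>p = Ptot \<longrightarrow>
              Phi P' Pp' / Beta P' Pp' \<le> Phi P Pp / Beta P Pp))))"
proof -
  have K_pos: "K \<ge> 1" using assms(1) by simp
  have ratio_pos: "Beta P Pp / Phi P Pp > 0" if "P > 0" "Pp > 0" for P Pp
  proof -
    have s: "s_par sp2 \<alpha> Pp \<tau>p > 0" using s_par_pos assms that by simp
    have "Beta P Pp > 0" unfolding Beta_def
      using beta_pos[OF \<open>c > 0\<close> s \<open>cmod a < 1\<close> \<open>sd2 > 0\<close>] that by simp
    moreover have "Phi P Pp > 0" unfolding Phi_def
      using phi_pos[OF \<open>c > 0\<close> s \<open>cmod a < 1\<close> \<open>\<alpha> > 0\<close> \<open>P > 0\<close>] .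
    ultimately show ?thesis by simp
  qed
  have gbar_le_iff_ratio:
    "gbar Nr K (Beta P' Pp' / Phi P' Pp') \<le> gbar Nr K (Beta P Pp / Phi P Pp)
     \<longleftrightarrow> Phi P' Pp' / Beta P' Pp' \<le> Phi P Pp / Beta P Pp"
    if "P > 0" "Pp > 0" "P' > 0" "Pp' > 0" for P Pp P' Pp'
    using gbar_le_iff[OF K_pos \<open>Nr \<ge> K\<close> ratio_pos ratio_pos]
      inverse_ratio_le_iff[OF ratio_pos ratio_pos] that by simp
  show ?thesis
    apply (intro conjI allI impI)
    subgoal
      by (rule sinr_eq_unique_solution[OF K_pos \<open>Nr \<ge> K\<close> ratio_pos]) assumption+
    subgoal
      by (rule gbar_strict_antimono[OF K_pos \<open>Nr \<ge> K\<close> ratio_pos]) assumption+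
    subgoal
      using gbar_le_iff_ratio by blast
    done
qed

end
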